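(* Let $(X,d)$ be a proper metric space and $f:X\to\mathbb R_+=[0,\infty)$ a coarsely proper (not necessarily continuous) function. Then there is a continuous, proper, asymptotically Lipschitz function $q:X\to\mathbb R_+$ with $q\le f$ on $X$.
   Context: A metric space is proper if closed balls are compact. A function is coarsely proper if the preimage of every bounded set is bounded; proper if preimages of compact sets are compact; asymptotically Lipschitz if there are $\lambda,s\ge0$ with $|q(x)-q(x')|\le\lambda d(x,x')+s$. *)

theory Defs
  imports "HOL-Analysis.Analysis"
begin

definition proper_metric_space :: "'a::metric_space itself \<Rightarrow> bool" where
  "proper_metric_space _ \<longleftrightarrow> (\<forall>(x::'a) r. compact (cball x r))"

definition coarsely_proper :: "('a::metric_space \<Rightarrow> 'b::metric_space) \<Rightarrow> bool" where
  "coarsely_proper f \<longleftrightarrow> (\<forall>B. bounded B \<longrightarrow> bounded (f -` B))"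

definition proper_map :: "('a::topological_space \<Rightarrow> 'b::topological_space) \<Rightarrow> bool" where
  "proper_map f \<longleftrightarrow> (\<forall>K. compact K \<longrightarrow> compact (f -` K))"

definition asymptotically_lipschitz :: "('a::metric_space \<Rightarrow> real) \<Rightarrow> bool" where
  "asymptotically_lipschitz q \<longleftrightarrow>
     (\<exists>L s. L \<ge> 0 \<and> s \<ge> 0 \<and> (\<forall>x x'. \<bar>q x - q x'\<bar> \<le> L * dist x x' + s))"

end

theory Submission
  imports Defs
begin

text \<open>Take for q the inf-convolution of f with the metric, q(x) = inf over y of f(y) + d(x,y), the
largest 1-Lipschitz minorant of f. It is 1-Lipschitz, hence continuous and asymptotically
Lipschitz. If q x is small, some y has both f y and d(x,y) small; so x lies near the bounded
set where f is small, and q is coarsely proper. In a proper space a continuous coarsely proper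
map is proper, because the preimage of a compact set is closed and bounded.\<close>

definition lipschitz_minorant :: "('a::metric_space \<Rightarrow> real) \<Rightarrow> 'a \<Rightarrow> real" where
  "lipschitz_minorant f x = (INF y. f y + dist x y)"

context
  fixes f :: "'a::metric_space \<Rightarrow> real"
  assumes f_nonneg: "\<And>x. 0 \<le> f x"
begin

lemma bdd_below_minorant_candidates: "bdd_below (range (\<lambda>y. f y + dist x y))"
  using f_nonneg by (intro bdd_belowI[of _ 0]) (auto intro: add_nonneg_nonneg)

lemma lipschitz_minorant_le: "lipschitz_minorant f x \<le> f y + dist x y"
  unfolding lipschitz_minorant_def by (rule cINF_lower[OF bdd_below_minorant_candidates]) simp

lemma lipschitz_minorant_le_self: "lipschitz_minorant f x \<le> f x"
  using lipschitz_minorant_le[of x x] by simp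

lemma lipschitz_minorant_nonneg: "0 \<le> lipschitz_minorant f x"
  unfolding lipschitz_minorant_def using f_nonneg by (intro cINF_greatest) auto

lemma lipschitz_minorant_le_shift: "lipschitz_minorant f x \<le> lipschitz_minorant f x' + dist x x'"
proof -
  have "lipschitz_minorant f x - dist x x' \<le> lipschitz_minorant f x'"
    unfolding lipschitz_minorant_def[of f x']
  proof (rule cINF_greatest)
    fix y
    have "lipschitz_minorant f x \<le> f y + dist x y"
      by (rule lipschitz_minorant_le)
    also have "\<dots> \<le> f y + dist x' y + dist x x'"
      using dist_triangle[of x y x'] by (simp add: dist_commute)
    finally show "lipschitz_minorant f x - dist x x' \<le> f y + dist x' y"
      by simp
  qed simp
  then show ?thesis by simp
qed

lemma lipschitz_on_lipschitz_minorant: "1-lipschitz_on UNIV (lipschitz_minorant f)"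
proof (rule lipschitz_onI)
  fix x x' :: 'a
  show "dist (lipschitz_minorant f x) (lipschitz_minorant f x') \<le> 1 * dist x x'"
    using lipschitz_minorant_le_shift[of x x'] lipschitz_minorant_le_shift[of x' x]
    by (simp add: dist_real_def dist_commute abs_le_iff)
qed simp

lemma lipschitz_minorant_less_imp:
  assumes "lipschitz_minorant f x < c"
  obtains y where "f y < c" and "dist x y < c"
proof -
  obtain y where y: "f y + dist x y < c"
    using assms cInf_lessD[of "range (\<lambda>y. f y + dist x y)" c]
    unfolding lipschitz_minorant_def by blast
  show thesis
    using f_nonneg[of y] zero_le_dist[of x y] y by (intro that[of y]) linarith+
qed

lemma coarsely_proper_lipschitz_minorant:
  assumes "coarsely_proper f"
  shows "coarsely_proper (lipschitz_minorant f)"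
  unfolding coarsely_proper_def
proof (intro allI impI)
  fix B :: "real set"
  assume "bounded B"
  then obtain c where c: "\<And>t. t \<in> B \<Longrightarrow> t < c"
    by (metis bounded_iff gt_ex order.strict_trans1 real_norm_def abs_le_iff)
  have "bounded (f -` cball 0 c)"
    using assms unfolding coarsely_proper_def by simp
  then obtain a r where ar: "f -` cball 0 c \<subseteq> cball a r"
    unfolding bounded_subset_cball by blast
  have "lipschitz_minorant f -` B \<subseteq> cball a (r + c)"
  proof
    fix x
    assume "x \<in> lipschitz_minorant f -` B"
    then obtain y where y: "f y < c" "dist x y < c"
      using c lipschitz_minorant_less_imp by blast
    then have "y \<in> cball a r"
      using f_nonneg[of y] by (intro subsetD[OF ar]) (simp add: dist_real_def)
    then show "x \<in> cball a (r + c)"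
      using y dist_triangle[of a x y] by (simp add: dist_commute)
  qed
  then show "bounded (lipschitz_minorant f -` B)"
    using bounded_cball bounded_subset by blast
qed

end

lemma proper_map_if_continuous_coarsely_proper:
  fixes q :: "'a::metric_space \<Rightarrow> 'b::metric_space"
  assumes "proper_metric_space TYPE('a)" "continuous_on UNIV q" "coarsely_proper q"
  shows "proper_map q"
  unfolding proper_map_def
proof (intro allI impI)
  fix K :: "'b set"
  assume K: "compact K"
  have "bounded (q -` K)"
    using assms(3) compact_imp_bounded[OF K] unfolding coarsely_proper_def by blast
  then obtain a r where sub: "q -` K \<subseteq> cball a r"
    unfolding bounded_subset_cball by blast
  have "closed (q -` K)"
    using continuous_closed_vimage[of K q] assms(2) compact_imp_closed[OF K]
    by (simp add: continuous_on_eq_continuous_at)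
  moreover have "compact (cball a r)"
    using assms(1) unfolding proper_metric_space_def by blast
  ultimately show "compact (q -` K)"
    using compact_Int_closed sub by (metis inf.absorb2)
qed

lemma asymptotically_lipschitz_if_lipschitz_on:
  assumes "L-lipschitz_on UNIV q"
  shows "asymptotically_lipschitz q"
  unfolding asymptotically_lipschitz_def
proof (intro exI conjI allI)
  fix x x'
  show "\<bar>q x - q x'\<bar> \<le> L * dist x x' + 0"
    using lipschitz_onD[OF assms] by (simp add: dist_real_def)
qed (use lipschitz_on_nonneg[OF assms] in auto)

theorem proposition4p5:
  fixes f :: "'a::metric_space \<Rightarrow> real"
  assumes "proper_metric_space TYPE('a)"
    and "\<forall>x. f x \<ge> 0"
    and "coarsely_proper f"
  shows "\<exists>q :: 'a \<Rightarrow> real. continuous_on UNIV q \<and> proper_map q \<and>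
           asymptotically_lipschitz q \<and> (\<forall>x. 0 \<le> q x \<and> q x \<le> f x)"
proof (intro exI conjI allI)
  have f_nonneg: "\<And>x. 0 \<le> f x"
    using assms(2) by blast
  note lipschitz = lipschitz_on_lipschitz_minorant[OF f_nonneg]
  show continuous: "continuous_on UNIV (lipschitz_minorant f)"
    using lipschitz by (rule lipschitz_on_continuous_on)
  show "proper_map (lipschitz_minorant f)"
    using assms(1) continuous coarsely_proper_lipschitz_minorant[OF f_nonneg assms(3)]
    by (rule proper_map_if_continuous_coarsely_proper)
  show "asymptotically_lipschitz (lipschitz_minorant f)"
    using lipschitz by (rule asymptotically_lipschitz_if_lipschitz_on)
  show "0 \<le> lipschitz_minorant f x" "lipschitz_minorant f x \<le> f x" for x
    using lipschitz_minorant_nonneg lipschitz_minorant_le_self f_nonneg by blast+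
qed

end
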